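(* Let $A$ be a centrally essential ring such that the factor ring $A/J(A)$ by the Jacobson radical is not commutative. Then the polynomial ring $A[x]$ (in a central indeterminate $x$) is centrally essential but is neither right quasi-invariant nor left quasi-invariant.
   Context: All rings are associative, unital and non-zero. $Z(A)$ denotes the center of a ring $A$. A ring $A$ is centrally essential if either $A$ is commutative or for every non-central element $a\in A$ there exist non-zero central elements $x,y\in Z(A)$ with $ax=y$. A ring is right (resp. left) quasi-invariant if every maximal right (resp. left) ideal of it is a two-sided ideal. *)

theory Defs
  imports "HOL-Algebra.Algebra"
begin

definition ring_center :: "('a, 'm) ring_scheme \<Rightarrow> 'a set" where
  "ring_center R = {z \<in> carrier R. \<forall>a \<in> carrier R. z \<otimes>\<^bsub>R\<^esub> a = a \<otimes>\<^bsub>R\<^esub> z}"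

definition mult_commutative :: "('a, 'm) ring_scheme \<Rightarrow> bool" where
  "mult_commutative R \<longleftrightarrow>
     (\<forall>a \<in> carrier R. \<forall>b \<in> carrier R. a \<otimes>\<^bsub>R\<^esub> b = b \<otimes>\<^bsub>R\<^esub> a)"

definition centrally_essential :: "('a, 'm) ring_scheme \<Rightarrow> bool" where
  "centrally_essential R \<longleftrightarrow>
     mult_commutative R \<or>
     (\<forall>a \<in> carrier R. a \<notin> ring_center R \<longrightarrow>
        (\<exists>x \<in> ring_center R. \<exists>y \<in> ring_center R.
           x \<noteq> \<zero>\<^bsub>R\<^esub> \<and> y \<noteq> \<zero>\<^bsub>R\<^esub> \<and> a \<otimes>\<^bsub>R\<^esub> x = y))"

definition right_ideal :: "'a set \<Rightarrow> ('a, 'm) ring_scheme \<Rightarrow> bool" where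
  "right_ideal I R \<longleftrightarrow> additive_subgroup I R \<and>
     (\<forall>a \<in> I. \<forall>r \<in> carrier R. a \<otimes>\<^bsub>R\<^esub> r \<in> I)"

definition left_ideal :: "'a set \<Rightarrow> ('a, 'm) ring_scheme \<Rightarrow> bool" where
  "left_ideal I R \<longleftrightarrow> additive_subgroup I R \<and>
     (\<forall>a \<in> I. \<forall>r \<in> carrier R. r \<otimes>\<^bsub>R\<^esub> a \<in> I)"

definition maximal_right_ideal :: "'a set \<Rightarrow> ('a, 'm) ring_scheme \<Rightarrow> bool" where
  "maximal_right_ideal M R \<longleftrightarrow> right_ideal M R \<and> M \<noteq> carrier R \<and>
     (\<forall>I. right_ideal I R \<and> M \<subseteq> I \<longrightarrow> I = M \<or> I = carrier R)"

definition maximal_left_ideal :: "'a set \<Rightarrow> ('a, 'm) ring_scheme \<Rightarrow> bool" where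
  "maximal_left_ideal M R \<longleftrightarrow> left_ideal M R \<and> M \<noteq> carrier R \<and>
     (\<forall>I. left_ideal I R \<and> M \<subseteq> I \<longrightarrow> I = M \<or> I = carrier R)"

definition right_quasi_invariant :: "('a, 'm) ring_scheme \<Rightarrow> bool" where
  "right_quasi_invariant R \<longleftrightarrow> (\<forall>M. maximal_right_ideal M R \<longrightarrow> ideal M R)"

definition left_quasi_invariant :: "('a, 'm) ring_scheme \<Rightarrow> bool" where
  "left_quasi_invariant R \<longleftrightarrow> (\<forall>M. maximal_left_ideal M R \<longrightarrow> ideal M R)"

definition jacobson_radical :: "('a, 'm) ring_scheme \<Rightarrow> 'a set" where
  "jacobson_radical R = carrier R \<inter> \<Inter> {M. maximal_right_ideal M R}"

end

theory Submission
  imports Defs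
begin

text \<open>
  Since the indeterminate x is central, a non-central polynomial can be multiplied by nonzero
  central constants, one non-central coefficient at a time, until all its coefficients are
  central, without ever becoming zero; so A[x] is centrally essential.

  As A/J(A) is not commutative, some commutator ab - ba lies outside J(A), hence outside a
  maximal right ideal M. If M is not two-sided, neither is the maximal right ideal of A[x]
  formed by the polynomials with constant term in M. Otherwise the polynomials f whose value
  a^0 f_0 + a^1 f_1 + ... (a substituted to the left of the coefficients) lies in M form a
  maximal right ideal containing x - a but not b(x - a), whose value is ab - ba. An element
  lying in all maximal left ideals lies in J(A), so the commutator also avoids a maximal left
  ideal, and the left-handed statement follows by passing to the opposite ring.
\<close>

lemma (in ring) additive_subgroup_iff:
  "additive_subgroup I R \<longleftrightarrow>
     I \<subseteq> carrier R \<and> \<zero> \<in> I \<and> (\<forall>x\<in>I. \<forall>y\<in>I. x \<oplus> y \<in> I) \<and> (\<forall>x\<in>I. \<ominus> x \<in> I)"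
proof
  assume "additive_subgroup I R"
  then interpret additive_subgroup I R .
  show "I \<subseteq> carrier R \<and> \<zero> \<in> I \<and> (\<forall>x\<in>I. \<forall>y\<in>I. x \<oplus> y \<in> I) \<and> (\<forall>x\<in>I. \<ominus> x \<in> I)"
    using a_subset by auto
next
  assume "I \<subseteq> carrier R \<and> \<zero> \<in> I \<and> (\<forall>x\<in>I. \<forall>y\<in>I. x \<oplus> y \<in> I) \<and> (\<forall>x\<in>I. \<ominus> x \<in> I)"
  then show "additive_subgroup I R"
    by (intro additive_subgroupI add.subgroupI) (auto simp: a_inv_def)
qed

lemma (in abelian_group) finsum_closed_additive_subgroup:
  assumes H: "additive_subgroup H G" and f: "f \<in> A \<rightarrow> H"
  shows "finsum G f A \<in> H"
  using f
proof (induction A rule: infinite_finite_induct)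
  case (insert x A)
  moreover have "H \<subseteq> carrier G"
    using H by (rule additive_subgroup.a_subset)
  ultimately show ?case
    using additive_subgroup.a_closed[OF H] by (auto simp: Pi_def subsetD)
qed (use H additive_subgroup.zero_closed in auto)

section \<open>Opposite rings\<close>

(* A relation rather than a construction: UP of the opposite ring is opposite to UP A,
   although the two records differ in the scalar multiplication field. *)
definition opposite_rings :: "('a, 'm) ring_scheme \<Rightarrow> ('a, 'm) ring_scheme \<Rightarrow> bool" where
  "opposite_rings R S \<longleftrightarrow>
     carrier S = carrier R \<and> (\<oplus>\<^bsub>S\<^esub>) = (\<oplus>\<^bsub>R\<^esub>) \<and> \<zero>\<^bsub>S\<^esub> = \<zero>\<^bsub>R\<^esub> \<and> \<one>\<^bsub>S\<^esub> = \<one>\<^bsub>R\<^esub> \<and>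
     (\<forall>x \<in> carrier R. \<forall>y \<in> carrier R. x \<otimes>\<^bsub>S\<^esub> y = y \<otimes>\<^bsub>R\<^esub> x)"

definition opposite_ring :: "('a, 'm) ring_scheme \<Rightarrow> ('a, 'm) ring_scheme" where
  "opposite_ring R = R\<lparr>mult := \<lambda>x y. y \<otimes>\<^bsub>R\<^esub> x\<rparr>"

lemma opposite_rings_opposite_ring: "opposite_rings R (opposite_ring R)"
  by (simp add: opposite_rings_def opposite_ring_def)

lemma opposite_rings_add_monoid: "opposite_rings R S \<Longrightarrow> add_monoid S = add_monoid R"
  by (simp add: opposite_rings_def)

lemma (in ring) opposite_rings_ring:
  assumes RS: "opposite_rings R S"
  shows "ring S"
proof -
  have carr: "carrier S = carrier R" and one: "\<one>\<^bsub>S\<^esub> = \<one>"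
    and add: "\<And>x y. x \<oplus>\<^bsub>S\<^esub> y = x \<oplus> y"
    and mult: "\<And>x y. x \<in> carrier R \<Longrightarrow> y \<in> carrier R \<Longrightarrow> x \<otimes>\<^bsub>S\<^esub> y = y \<otimes> x"
    using RS by (auto simp: opposite_rings_def)
  have "abelian_group S"
    using abelian_group_axioms opposite_rings_add_monoid[OF RS]
    by (simp add: abelian_group_def abelian_monoid_def abelian_group_axioms_def)
  moreover have "monoid S"
    by (rule monoidI) (auto simp: carr one mult m_assoc)
  ultimately show "ring S"
    by (rule ringI) (auto simp: carr add mult l_distr r_distr)
qed

lemma opposite_rings_left_ideal:
  "opposite_rings R S \<Longrightarrow> left_ideal I R \<longleftrightarrow> right_ideal I S"
  unfolding left_ideal_def right_ideal_def additive_subgroup_def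
  by (auto simp: opposite_rings_add_monoid) (auto simp: opposite_rings_def subgroup_def subsetD)

lemma opposite_rings_maximal_left_ideal:
  "opposite_rings R S \<Longrightarrow> maximal_left_ideal I R \<longleftrightarrow> maximal_right_ideal I S"
  unfolding maximal_left_ideal_def maximal_right_ideal_def
  by (simp add: opposite_rings_left_ideal) (simp add: opposite_rings_def)

lemma (in ring) opposite_rings_ideal:
  assumes RS: "opposite_rings R S"
  shows "ideal I S \<longleftrightarrow> ideal I R"
proof -
  have "additive_subgroup I S \<longleftrightarrow> additive_subgroup I R"
    by (simp add: additive_subgroup_def opposite_rings_add_monoid[OF RS])
  moreover have "ideal_axioms I S \<longleftrightarrow> ideal_axioms I R" if "additive_subgroup I R"
  proof -
    have flip: "x \<otimes>\<^bsub>S\<^esub> a = a \<otimes> x" "a \<otimes>\<^bsub>S\<^esub> x = x \<otimes> a" if "a \<in> I" "x \<in> carrier R" for a x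
    proof -
      have "a \<in> carrier R"
        using additive_subgroup.a_subset[OF \<open>additive_subgroup I R\<close>] that by blast
      then show "x \<otimes>\<^bsub>S\<^esub> a = a \<otimes> x" "a \<otimes>\<^bsub>S\<^esub> x = x \<otimes> a"
        using RS that by (simp_all add: opposite_rings_def)
    qed
    from RS show ?thesis
      unfolding ideal_axioms_def by (auto simp: flip opposite_rings_def)
  qed
  ultimately show ?thesis
    using opposite_rings_ring[OF RS] ring_axioms by (auto simp: ideal_def)
qed

lemma (in ring) opposite_rings_quasi_invariant:
  "opposite_rings R S \<Longrightarrow> left_quasi_invariant R \<longleftrightarrow> right_quasi_invariant S"
  by (simp add: left_quasi_invariant_def right_quasi_invariant_def
      opposite_rings_maximal_left_ideal opposite_rings_ideal)

lemma (in ring) opposite_rings_UP: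
  assumes RS: "opposite_rings R S"
  shows "opposite_rings (UP R) (UP S)"
proof -
  have carr: "carrier S = carrier R" and add: "(\<oplus>\<^bsub>S\<^esub>) = (\<oplus>)"
    and zero: "\<zero>\<^bsub>S\<^esub> = \<zero>" and one: "\<one>\<^bsub>S\<^esub> = \<one>"
    and mult: "\<And>x y. x \<in> carrier R \<Longrightarrow> y \<in> carrier R \<Longrightarrow> x \<otimes>\<^bsub>S\<^esub> y = y \<otimes> x"
    using RS by (auto simp: opposite_rings_def)
  have up: "up S = up R"
    by (simp add: up_def carr zero)
  have reflect: "(\<lambda>i. n - i) ` {..n} = {..n}" for n :: nat
  proof (intro equalityI subsetI)
    fix i assume "i \<in> {..n}"
    then show "i \<in> (\<lambda>i. n - i) ` {..n}"
      by (intro image_eqI[of _ _ "n - i"]) auto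
  qed auto
  have "(\<Oplus>\<^bsub>S\<^esub> i \<in> {..n}. p i \<otimes>\<^bsub>S\<^esub> q (n - i)) = (\<Oplus>i \<in> {..n}. q i \<otimes> p (n - i))"
    if "p \<in> up R" "q \<in> up R" for p q n
  proof -
    have pq: "p i \<in> carrier R" "q i \<in> carrier R" for i
      using that by auto
    have "(\<Oplus>\<^bsub>S\<^esub> i \<in> {..n}. p i \<otimes>\<^bsub>S\<^esub> q (n - i)) = (\<Oplus>i \<in> {..n}. q (n - i) \<otimes> p i)"
      by (simp add: finsum_def carr add zero mult pq)
    also have "\<dots> = (\<Oplus>i \<in> (\<lambda>i. n - i) ` {..n}. q i \<otimes> p (n - i))"
      by (subst add.finprod_reindex) (auto simp: pq inj_on_def intro!: add.finprod_cong')
    finally show ?thesis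
      by (simp add: reflect)
  qed
  then show ?thesis
    unfolding opposite_rings_def by (simp add: UP_def up add zero one cong: if_cong)
qed

section \<open>Maximal one-sided ideals and the Jacobson radical\<close>

context ring
begin

lemma right_ideal_one_eq_carrier: "right_ideal I R \<Longrightarrow> \<one> \<in> I \<Longrightarrow> I = carrier R"
  unfolding right_ideal_def additive_subgroup_iff by (metis l_one subsetI subset_antisym)

lemma left_ideal_one_eq_carrier: "left_ideal I R \<Longrightarrow> \<one> \<in> I \<Longrightarrow> I = carrier R"
  unfolding left_ideal_def additive_subgroup_iff by (metis r_one subsetI subset_antisym)

lemma maximal_right_ideal_one_notin: "maximal_right_ideal M R \<Longrightarrow> \<one> \<notin> M"
  unfolding maximal_right_ideal_def using right_ideal_one_eq_carrier by blast

lemma maximal_left_ideal_one_notin: "maximal_left_ideal M R \<Longrightarrow> \<one> \<notin> M"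
  unfolding maximal_left_ideal_def using left_ideal_one_eq_carrier by blast

lemma right_ideal_plus_principal:
  assumes M: "right_ideal M R" and u: "u \<in> carrier R"
  shows "right_ideal {w \<oplus> u \<otimes> r | w r. w \<in> M \<and> r \<in> carrier R} R"
proof -
  let ?I = "{w \<oplus> u \<otimes> r | w r. w \<in> M \<and> r \<in> carrier R}"
  have MR: "\<And>x. x \<in> M \<Longrightarrow> x \<in> carrier R" "\<zero> \<in> M" "\<And>x y. x \<in> M \<Longrightarrow> y \<in> M \<Longrightarrow> x \<oplus> y \<in> M"
    "\<And>x. x \<in> M \<Longrightarrow> \<ominus> x \<in> M" "\<And>x r. x \<in> M \<Longrightarrow> r \<in> carrier R \<Longrightarrow> x \<otimes> r \<in> M"
    using M unfolding right_ideal_def additive_subgroup_iff by auto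
  show ?thesis
    unfolding right_ideal_def additive_subgroup_iff
  proof (intro conjI ballI)
    show "?I \<subseteq> carrier R"
      using MR(1) u by auto
    show "\<zero> \<in> ?I"
      using MR(2) u by (intro CollectI exI[of _ \<zero>]) auto
  next
    fix x y assume "x \<in> ?I" "y \<in> ?I"
    then obtain w r w' r' where "x = w \<oplus> u \<otimes> r" "y = w' \<oplus> u \<otimes> r'"
      and "w \<in> M" "w' \<in> M" "r \<in> carrier R" "r' \<in> carrier R"
      by auto
    moreover from this have "x \<oplus> y = (w \<oplus> w') \<oplus> u \<otimes> (r \<oplus> r')"
      using MR(1) u by (auto simp: r_distr a_ac)
    ultimately show "x \<oplus> y \<in> ?I"
      using MR(3) by blast
  next
    fix x assume "x \<in> ?I"
    then obtain w r where "x = w \<oplus> u \<otimes> r" "w \<in> M" "r \<in> carrier R"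
      by auto
    moreover from this have "\<ominus> x = \<ominus> w \<oplus> u \<otimes> (\<ominus> r)"
      using MR(1) u by (auto simp: r_minus minus_add)
    ultimately show "\<ominus> x \<in> ?I"
      using MR(4) by blast
  next
    fix x s assume "x \<in> ?I" "s \<in> carrier R"
    then obtain w r where "x = w \<oplus> u \<otimes> r" "w \<in> M" "r \<in> carrier R"
      by auto
    moreover from this have "x \<otimes> s = w \<otimes> s \<oplus> u \<otimes> (r \<otimes> s)"
      using MR(1) u \<open>s \<in> carrier R\<close> by (auto simp: l_distr m_assoc)
    ultimately show "x \<otimes> s \<in> ?I"
      using MR(5) \<open>s \<in> carrier R\<close> by blast
  qed
qed

lemma maximal_right_ideal_comaximal:
  assumes M: "maximal_right_ideal M R" and u: "u \<in> carrier R" "u \<notin> M"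
  obtains w r where "w \<in> M" "r \<in> carrier R" "\<one> = w \<oplus> u \<otimes> r"
proof -
  define I where "I = {w \<oplus> u \<otimes> r | w r. w \<in> M \<and> r \<in> carrier R}"
  have MR: "right_ideal M R" "M \<subseteq> carrier R"
    using M unfolding maximal_right_ideal_def right_ideal_def additive_subgroup_iff by auto
  have "right_ideal I R"
    unfolding I_def using MR(1) u(1) by (rule right_ideal_plus_principal)
  moreover have "M \<subseteq> I"
  proof
    fix w assume "w \<in> M"
    then have "w = w \<oplus> u \<otimes> \<zero>" using MR(2) u by auto
    then show "w \<in> I" unfolding I_def using \<open>w \<in> M\<close> by blast
  qed
  moreover have "u = \<zero> \<oplus> u \<otimes> \<one>" using u by simp
  then have "u \<in> I" unfolding I_def using MR(1) additive_subgroup.zero_closed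
    unfolding right_ideal_def by blast
  ultimately have "I = carrier R"
    using M u unfolding maximal_right_ideal_def by blast
  then show ?thesis
    using that unfolding I_def by blast
qed

lemma left_ideal_Union_chain:
  assumes C: "C \<noteq> {}" "\<And>J. J \<in> C \<Longrightarrow> left_ideal J R"
    and chain: "\<And>J J'. J \<in> C \<Longrightarrow> J' \<in> C \<Longrightarrow> J \<subseteq> J' \<or> J' \<subseteq> J"
  shows "left_ideal (\<Union>C) R"
proof -
  have J: "\<And>J. J \<in> C \<Longrightarrow> J \<subseteq> carrier R \<and> \<zero> \<in> J \<and> (\<forall>x\<in>J. \<forall>y\<in>J. x \<oplus> y \<in> J) \<and>
      (\<forall>x\<in>J. \<ominus> x \<in> J) \<and> (\<forall>x\<in>J. \<forall>r\<in>carrier R. r \<otimes> x \<in> J)"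
    using C(2) unfolding left_ideal_def additive_subgroup_iff by blast
  show ?thesis
    unfolding left_ideal_def additive_subgroup_iff
  proof (intro conjI ballI)
    show "\<Union>C \<subseteq> carrier R" using J by blast
    show "\<zero> \<in> \<Union>C" using J C(1) by blast
  next
    fix x y assume "x \<in> \<Union>C" "y \<in> \<Union>C"
    then obtain Jx Jy where "x \<in> Jx" "y \<in> Jy" "Jx \<in> C" "Jy \<in> C" by auto
    with chain[of Jx Jy] J show "x \<oplus> y \<in> \<Union>C" by blast
  next
    fix x assume "x \<in> \<Union>C" then show "\<ominus> x \<in> \<Union>C" using J by blast
  next
    fix x r assume "x \<in> \<Union>C" "r \<in> carrier R" then show "r \<otimes> x \<in> \<Union>C" using J by blast
  qed
qed

lemma left_ideal_subset_maximal:
  assumes I: "left_ideal I R" "\<one> \<notin> I"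
  obtains M where "maximal_left_ideal M R" "I \<subseteq> M"
proof -
  define S where "S = {J. left_ideal J R \<and> I \<subseteq> J \<and> \<one> \<notin> J}"
  have "\<Union>C \<in> S" if C: "C \<noteq> {}" "subset.chain S C" for C
  proof -
    have CS: "C \<subseteq> S" and chain: "\<And>J J'. J \<in> C \<Longrightarrow> J' \<in> C \<Longrightarrow> J \<subseteq> J' \<or> J' \<subseteq> J"
      using C(2) unfolding subset.chain_def by auto
    then have "left_ideal (\<Union>C) R"
      using C(1) left_ideal_Union_chain unfolding S_def by blast
    then show ?thesis
      using CS C(1) unfolding S_def by blast
  qed
  moreover have "S \<noteq> {}"
    using I unfolding S_def by auto
  ultimately obtain M where M: "M \<in> S" "\<forall>J\<in>S. M \<subseteq> J \<longrightarrow> J = M"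
    using subset_Zorn_nonempty[of S] by blast
  have "maximal_left_ideal M R"
    unfolding maximal_left_ideal_def
  proof (intro conjI allI impI)
    show "left_ideal M R" "M \<noteq> carrier R"
      using M(1) unfolding S_def by auto
  next
    fix J assume J: "left_ideal J R \<and> M \<subseteq> J"
    show "J = M \<or> J = carrier R"
    proof (cases "\<one> \<in> J")
      case True
      then show ?thesis using J left_ideal_one_eq_carrier by blast
    next
      case False
      then have "J \<in> S" using J M(1) unfolding S_def by auto
      then show ?thesis using M(2) J by blast
    qed
  qed
  moreover have "I \<subseteq> M"
    using M(1) unfolding S_def by blast
  ultimately show ?thesis
    using that by blast
qed

lemma left_ideal_principal:
  assumes u: "u \<in> carrier R"
  shows "left_ideal {r \<otimes> u | r. r \<in> carrier R} R"
  unfolding left_ideal_def additive_subgroup_iff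
proof (intro conjI ballI)
  show "\<zero> \<in> {r \<otimes> u |r. r \<in> carrier R}"
    using u by (intro CollectI exI[of _ \<zero>]) auto
next
  fix x y assume "x \<in> {r \<otimes> u |r. r \<in> carrier R}" "y \<in> {r \<otimes> u |r. r \<in> carrier R}"
  then obtain r r' where "r \<in> carrier R" "r' \<in> carrier R" "x = r \<otimes> u" "y = r' \<otimes> u" by blast
  then show "x \<oplus> y \<in> {r \<otimes> u |r. r \<in> carrier R}"
    using u by (intro CollectI exI[of _ "r \<oplus> r'"]) (simp add: l_distr)
next
  fix x assume "x \<in> {r \<otimes> u |r. r \<in> carrier R}"
  then obtain r where "r \<in> carrier R" "x = r \<otimes> u" by blast
  then show "\<ominus> x \<in> {r \<otimes> u |r. r \<in> carrier R}"
    using u by (intro CollectI exI[of _ "\<ominus> r"]) (simp add: l_minus)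
next
  fix x s assume "x \<in> {r \<otimes> u |r. r \<in> carrier R}" "s \<in> carrier R"
  then obtain r where "r \<in> carrier R" "x = r \<otimes> u" by blast
  then show "s \<otimes> x \<in> {r \<otimes> u |r. r \<in> carrier R}"
    using u \<open>s \<in> carrier R\<close> by (intro CollectI exI[of _ "s \<otimes> r"]) (simp add: m_assoc)
qed (use u in auto)

lemma left_invertible_if_in_no_maximal_left_ideal:
  assumes u: "u \<in> carrier R" and notin: "\<And>M. maximal_left_ideal M R \<Longrightarrow> u \<notin> M"
  obtains v where "v \<in> carrier R" "v \<otimes> u = \<one>"
proof -
  define I where "I = {r \<otimes> u | r. r \<in> carrier R}"
  have I: "left_ideal I R"
    unfolding I_def using u by (rule left_ideal_principal)
  have "u \<in> I"
    unfolding I_def using u by (intro CollectI exI[of _ \<one>]) auto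
  have "\<one> \<in> I"
  proof (rule ccontr)
    assume "\<one> \<notin> I"
    then obtain M where "maximal_left_ideal M R" "I \<subseteq> M"
      using left_ideal_subset_maximal I by blast
    with \<open>u \<in> I\<close> notin show False by blast
  qed
  then obtain v where "v \<in> carrier R" "\<one> = v \<otimes> u"
    unfolding I_def by blast
  with that show ?thesis by simp
qed

lemma right_invertible_one_minus_if_left_invertible:
  assumes t: "t \<in> carrier R" and s: "s \<in> carrier R"
    and left_inv: "\<And>s. s \<in> carrier R \<Longrightarrow> \<exists>v\<in>carrier R. v \<otimes> (\<one> \<ominus> s \<otimes> t) = \<one>"
  obtains v where "v \<in> carrier R" "(\<one> \<ominus> s \<otimes> t) \<otimes> v = \<one>"
proof -
  obtain v where v: "v \<in> carrier R" "v \<otimes> (\<one> \<ominus> s \<otimes> t) = \<one>"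
    using left_inv s by blast
  have "v \<ominus> v \<otimes> s \<otimes> t = \<one>"
    using v s t by (simp add: r_distr a_minus_def r_minus m_assoc)
  then have "v = \<one> \<oplus> v \<otimes> s \<otimes> t"
    using v s t by (simp add: a_minus_def add.inv_solve_right')
  then have "v = \<one> \<ominus> (\<ominus> (v \<otimes> s)) \<otimes> t"
    using v s t by (simp add: a_minus_def l_minus minus_minus)
  then obtain z where z: "z \<in> carrier R" "z \<otimes> v = \<one>"
    using left_inv[of "\<ominus> (v \<otimes> s)"] v s by auto
  have "z = z \<otimes> (v \<otimes> (\<one> \<ominus> s \<otimes> t))"
    using z v by simp
  also have "\<dots> = (z \<otimes> v) \<otimes> (\<one> \<ominus> s \<otimes> t)"
    using z(1) v(1) s t by (simp add: m_assoc)
  also have "\<dots> = \<one> \<ominus> s \<otimes> t"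
    using z s t by simp
  finally have "z = \<one> \<ominus> s \<otimes> t" .
  with z that v(1) show ?thesis by blast
qed

(* Jacobson's lemma: 1 - rt invertible implies 1 - tr invertible. *)
lemma one_minus_swap_right_inverse:
  assumes t: "t \<in> carrier R" and r: "r \<in> carrier R" and v: "v \<in> carrier R"
    and inv: "(\<one> \<ominus> r \<otimes> t) \<otimes> v = \<one>"
  shows "(\<one> \<ominus> t \<otimes> r) \<otimes> (\<one> \<oplus> t \<otimes> v \<otimes> r) = \<one>"
proof -
  have "(\<one> \<ominus> t \<otimes> r) \<otimes> (\<one> \<oplus> t \<otimes> v \<otimes> r) = \<one> \<ominus> t \<otimes> r \<oplus> t \<otimes> ((\<one> \<ominus> r \<otimes> t) \<otimes> v) \<otimes> r"
    using t r v by (simp add: l_distr r_distr a_minus_def l_minus r_minus m_assoc a_ac)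
  also have "\<dots> = \<one>"
    unfolding inv using t r by (simp add: a_minus_def a_assoc l_neg)
  finally show ?thesis .
qed

lemma left_invertible_one_minus_mult:
  assumes t: "t \<in> carrier R" and in_left: "\<And>L. maximal_left_ideal L R \<Longrightarrow> t \<in> L"
    and s: "s \<in> carrier R"
  shows "\<exists>v\<in>carrier R. v \<otimes> (\<one> \<ominus> s \<otimes> t) = \<one>"
proof -
  have notin: "\<one> \<ominus> s \<otimes> t \<notin> L" if L: "maximal_left_ideal L R" for L
  proof
    assume "\<one> \<ominus> s \<otimes> t \<in> L"
    moreover have "s \<otimes> t \<in> L"
      using in_left[OF L] s L unfolding maximal_left_ideal_def left_ideal_def by blast
    ultimately have "\<one> \<ominus> s \<otimes> t \<oplus> s \<otimes> t \<in> L"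
      using L unfolding maximal_left_ideal_def left_ideal_def additive_subgroup_iff by blast
    then show False
      using maximal_left_ideal_one_notin[OF L] s t by (simp add: a_minus_def a_assoc l_neg)
  qed
  obtain v where "v \<in> carrier R" "v \<otimes> (\<one> \<ominus> s \<otimes> t) = \<one>"
    by (rule left_invertible_if_in_no_maximal_left_ideal[of "\<one> \<ominus> s \<otimes> t"])
      (use s t notin in auto)
  then show ?thesis by blast
qed

lemma jacobson_radical_if_in_maximal_left_ideals:
  assumes t: "t \<in> carrier R" and in_left: "\<And>L. maximal_left_ideal L R \<Longrightarrow> t \<in> L"
  shows "t \<in> jacobson_radical R"
  unfolding jacobson_radical_def
proof (intro IntI CollectI InterI t)
  fix M assume "M \<in> {M. maximal_right_ideal M R}"
  then have M: "maximal_right_ideal M R" by simp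
  then have MR: "\<And>x r. x \<in> M \<Longrightarrow> r \<in> carrier R \<Longrightarrow> x \<otimes> r \<in> M" "M \<subseteq> carrier R"
    unfolding maximal_right_ideal_def right_ideal_def additive_subgroup_iff by auto
  show "t \<in> M"
  proof (rule ccontr)
    assume "t \<notin> M"
    obtain w r where wr: "w \<in> M" "r \<in> carrier R" "\<one> = w \<oplus> t \<otimes> r"
      by (rule maximal_right_ideal_comaximal[of M t]) (use M t \<open>t \<notin> M\<close> in auto)
    obtain v where v: "v \<in> carrier R" "(\<one> \<ominus> r \<otimes> t) \<otimes> v = \<one>"
      by (rule right_invertible_one_minus_if_left_invertible[OF t wr(2)])
        (use left_invertible_one_minus_mult[OF t in_left] in blast)
    have "w \<in> carrier R"
      using wr(1) MR(2) by blast
    then have "w = (w \<oplus> t \<otimes> r) \<ominus> t \<otimes> r"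
      using wr(2) t by (simp add: a_minus_def a_assoc r_neg)
    then have "w = \<one> \<ominus> t \<otimes> r"
      by (simp flip: wr(3))
    then have "w \<otimes> (\<one> \<oplus> t \<otimes> v \<otimes> r) = \<one>"
      using one_minus_swap_right_inverse[OF t wr(2) v] by simp
    moreover have "w \<otimes> (\<one> \<oplus> t \<otimes> v \<otimes> r) \<in> M"
      using MR(1)[OF wr(1)] t v wr(2) by simp
    ultimately show False
      using maximal_right_ideal_one_notin[OF M] by simp
  qed
qed

end

section \<open>Evaluating polynomials to the left of the coefficients\<close>

context UP_ring
begin

lemma coeff_mult_monom_eq:
  assumes c: "c \<in> carrier R" and p: "p \<in> carrier P"
  shows "up_ring.coeff P (p \<otimes>\<^bsub>P\<^esub> up_ring.monom P c j) n =
    (if j \<le> n then up_ring.coeff P p (n - j) \<otimes> c else \<zero>)"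
proof (cases "j \<le> n")
  case True
  have "up_ring.coeff P (p \<otimes>\<^bsub>P\<^esub> up_ring.monom P c j) n =
      (\<Oplus>i\<in>{..n}. if i = n - j then up_ring.coeff P p i \<otimes> c else \<zero>)"
    using c p True by (auto simp: coeff_mult intro!: R.finsum_cong')
  with c p True show ?thesis
    by (simp add: R.add.finprod_singleton_swap)
qed (use c p in \<open>auto simp: coeff_mult intro!: R.add.finprod_one_eqI\<close>)

lemma coeff_monom_mult_eq:
  assumes c: "c \<in> carrier R" and p: "p \<in> carrier P"
  shows "up_ring.coeff P (up_ring.monom P c j \<otimes>\<^bsub>P\<^esub> p) n =
    (if j \<le> n then c \<otimes> up_ring.coeff P p (n - j) else \<zero>)"
proof (cases "j \<le> n")
  case True
  have "up_ring.coeff P (up_ring.monom P c j \<otimes>\<^bsub>P\<^esub> p) n =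
      (\<Oplus>i\<in>{..n}. if i = j then c \<otimes> up_ring.coeff P p (n - i) else \<zero>)"
    using c p True by (auto simp: coeff_mult intro!: R.finsum_cong')
  with c p True show ?thesis
    by (simp add: R.add.finprod_singleton_swap)
qed (use c p in \<open>auto simp: coeff_mult intro!: R.add.finprod_one_eqI\<close>)

(* Not a ring homomorphism (a need not be central); it is only compatible with right
   multiplication by monomials, see left_eval_mult_monom. *)
definition left_eval :: "'a \<Rightarrow> (nat \<Rightarrow> 'a) \<Rightarrow> 'a" where
  "left_eval a f = (\<Oplus>i\<in>{..deg R f}. a [^] i \<otimes> up_ring.coeff P f i)"

lemma left_eval_closed [simp]: "a \<in> carrier R \<Longrightarrow> f \<in> carrier P \<Longrightarrow> left_eval a f \<in> carrier R"
  unfolding left_eval_def by (auto intro: R.finsum_closed)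

lemma left_eval_eq_finsum:
  assumes a: "a \<in> carrier R" and f: "f \<in> carrier P"
    and vanish: "\<And>n. N < n \<Longrightarrow> up_ring.coeff P f n = \<zero>"
  shows "left_eval a f = (\<Oplus>i\<in>{..N}. a [^] i \<otimes> up_ring.coeff P f i)"
  unfolding left_eval_def
  by (rule R.add.finprod_mono_neutral_cong) (use a f vanish deg_aboveD in auto)

lemma left_eval_add:
  assumes a: "a \<in> carrier R" and f: "f \<in> carrier P" and g: "g \<in> carrier P"
  shows "left_eval a (f \<oplus>\<^bsub>P\<^esub> g) = left_eval a f \<oplus> left_eval a g"
proof -
  define N where "N = max (deg R f) (deg R g)"
  have vanish: "up_ring.coeff P f n = \<zero>" "up_ring.coeff P g n = \<zero>" if "N < n" for n
    using that f g deg_aboveD unfolding N_def by auto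
  have "left_eval a (f \<oplus>\<^bsub>P\<^esub> g) = (\<Oplus>i\<in>{..N}. a [^] i \<otimes> up_ring.coeff P (f \<oplus>\<^bsub>P\<^esub> g) i)"
    by (rule left_eval_eq_finsum) (use a f g vanish in auto)
  also have "\<dots> = (\<Oplus>i\<in>{..N}. a [^] i \<otimes> up_ring.coeff P f i \<oplus> a [^] i \<otimes> up_ring.coeff P g i)"
    using a f g by (simp add: R.r_distr)
  also have "\<dots> = left_eval a f \<oplus> left_eval a g"
    using a f g by (simp add: left_eval_eq_finsum[OF a f vanish(1)]
        left_eval_eq_finsum[OF a g vanish(2)] R.finsum_addf)
  finally show ?thesis .
qed

lemma left_eval_zero [simp]: "a \<in> carrier R \<Longrightarrow> left_eval a \<zero>\<^bsub>P\<^esub> = \<zero>"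
  by (simp add: left_eval_def)

lemma left_eval_a_inv:
  assumes a: "a \<in> carrier R" and f: "f \<in> carrier P"
  shows "left_eval a (\<ominus>\<^bsub>P\<^esub> f) = \<ominus> left_eval a f"
proof -
  have "left_eval a (\<ominus>\<^bsub>P\<^esub> f) \<oplus> left_eval a f = \<zero>"
    using a f by (simp flip: left_eval_add add: P.l_neg)
  then show ?thesis
    using a f by (simp add: R.minus_equality)
qed

lemma left_eval_monom:
  assumes a: "a \<in> carrier R" and c: "c \<in> carrier R"
  shows "left_eval a (up_ring.monom P c n) = a [^] n \<otimes> c"
proof -
  have "left_eval a (up_ring.monom P c n) = (\<Oplus>i\<in>{..n}. a [^] i \<otimes> up_ring.coeff P (up_ring.monom P c n) i)"
    by (rule left_eval_eq_finsum) (use a c in auto)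
  also have "\<dots> = (\<Oplus>i\<in>{..n}. if i = n then a [^] i \<otimes> c else \<zero>)"
    using a c by (intro R.finsum_cong') auto
  also have "\<dots> = a [^] n \<otimes> c"
    using a c by (simp add: R.add.finprod_singleton_swap)
  finally show ?thesis .
qed

lemma left_eval_const [simp]: "a \<in> carrier R \<Longrightarrow> c \<in> carrier R \<Longrightarrow> left_eval a (up_ring.monom P c 0) = c"
  by (simp add: left_eval_monom)

lemma left_eval_mult_monom:
  assumes a: "a \<in> carrier R" and f: "f \<in> carrier P" and c: "c \<in> carrier R"
  shows "left_eval a (f \<otimes>\<^bsub>P\<^esub> up_ring.monom P c j) = a [^] j \<otimes> left_eval a f \<otimes> c"
proof -
  let ?f = "up_ring.coeff P f"
  have "left_eval a (f \<otimes>\<^bsub>P\<^esub> up_ring.monom P c j) =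
      (\<Oplus>i\<in>{..deg R f + j}. a [^] i \<otimes> up_ring.coeff P (f \<otimes>\<^bsub>P\<^esub> up_ring.monom P c j) i)"
    by (rule left_eval_eq_finsum) (use a f c deg_aboveD in \<open>auto simp: coeff_mult_monom_eq simp del: coeff_mult\<close>)
  also have "\<dots> = (\<Oplus>i\<in>{j..deg R f + j}. a [^] i \<otimes> (?f (i - j) \<otimes> c))"
    by (rule R.add.finprod_mono_neutral_cong_right)
      (use a f c in \<open>auto simp: coeff_mult_monom_eq simp del: coeff_mult\<close>)
  also have "\<dots> = (\<Oplus>i\<in>{..deg R f}. a [^] (i + j) \<otimes> (?f i \<otimes> c))"
  proof -
    have "{j..deg R f + j} = (\<lambda>i. i + j) ` {..deg R f}"
      by (simp add: atMost_atLeast0)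
    then show ?thesis
      by (simp, subst R.add.finprod_reindex) (use a f c in auto)
  qed
  also have "\<dots> = (\<Oplus>i\<in>{..deg R f}. a [^] j \<otimes> (a [^] i \<otimes> ?f i) \<otimes> c)"
  proof -
    have "a [^] (i + j) = a [^] j \<otimes> a [^] i" for i
      using a by (simp add: R.nat_pow_mult add.commute)
    then show ?thesis
      using a f c by (intro R.finsum_cong') (auto simp: R.m_assoc)
  qed
  also have "\<dots> = a [^] j \<otimes> left_eval a f \<otimes> c"
    unfolding left_eval_def using a f c
    by (simp add: R.finsum_ldistr R.finsum_rdistr)
  finally show ?thesis .
qed

section \<open>Maximal right ideals of polynomial rings\<close>

lemma right_ideal_left_eval_preimage:
  assumes M: "right_ideal M R" and a: "a \<in> carrier R" and aM: "\<And>w. w \<in> M \<Longrightarrow> a \<otimes> w \<in> M"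
  shows "right_ideal {f \<in> carrier P. left_eval a f \<in> M} P"
proof -
  let ?I = "{f \<in> carrier P. left_eval a f \<in> M}"
  have MR: "\<And>x. x \<in> M \<Longrightarrow> x \<in> carrier R" "\<zero> \<in> M" "\<And>x y. x \<in> M \<Longrightarrow> y \<in> M \<Longrightarrow> x \<oplus> y \<in> M"
    "\<And>x. x \<in> M \<Longrightarrow> \<ominus> x \<in> M" "\<And>x r. x \<in> M \<Longrightarrow> r \<in> carrier R \<Longrightarrow> x \<otimes> r \<in> M"
    using M unfolding right_ideal_def R.additive_subgroup_iff by auto
  have pow: "a [^] j \<otimes> w \<in> M" if "w \<in> M" for j :: nat and w
  proof (induction j)
    case (Suc j)
    have "a [^] Suc j \<otimes> w = a \<otimes> (a [^] j \<otimes> w)"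
      unfolding R.nat_pow_Suc2[OF a] using a MR(1)[OF that] by (simp add: R.m_assoc)
    with Suc aM show ?case by simp
  qed (use that MR(1) in simp)
  have I: "additive_subgroup ?I P"
    unfolding P.additive_subgroup_iff using a MR by (auto simp: left_eval_add left_eval_a_inv)
  moreover have "f \<otimes>\<^bsub>P\<^esub> g \<in> ?I" if f: "f \<in> ?I" and g: "g \<in> carrier P" for f g
  proof -
    have "f \<otimes>\<^bsub>P\<^esub> g = (\<Oplus>\<^bsub>P\<^esub>j\<in>{..deg R g}. f \<otimes>\<^bsub>P\<^esub> up_ring.monom P (up_ring.coeff P g j) j)"
      using f g by (subst up_repr[OF g, symmetric]) (auto simp: P.finsum_rdistr)
    also have "\<dots> \<in> ?I"
      using f g a pow MR(5) by (intro P.finsum_closed_additive_subgroup[OF I]) (auto simp: left_eval_mult_monom)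
    finally show ?thesis .
  qed
  ultimately show ?thesis
    unfolding right_ideal_def by blast
qed

lemma one_minus_in_left_eval_preimage:
  assumes M: "maximal_right_ideal M R" and a: "a \<in> carrier R"
    and g: "g \<in> carrier P" "left_eval a g \<notin> M"
  obtains r where "r \<in> carrier R"
    "\<one>\<^bsub>P\<^esub> \<ominus>\<^bsub>P\<^esub> g \<otimes>\<^bsub>P\<^esub> up_ring.monom P r 0 \<in> {f \<in> carrier P. left_eval a f \<in> M}"
proof -
  obtain w r where wr: "w \<in> M" "r \<in> carrier R" "\<one> = w \<oplus> left_eval a g \<otimes> r"
    by (rule R.maximal_right_ideal_comaximal[OF M]) (use a g in auto)
  have "M \<subseteq> carrier R"
    using M unfolding maximal_right_ideal_def right_ideal_def R.additive_subgroup_iff by auto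
  with wr(1) have "w \<in> carrier R" by blast
  let ?h = "g \<otimes>\<^bsub>P\<^esub> up_ring.monom P r 0"
  have "left_eval a (\<one>\<^bsub>P\<^esub> \<ominus>\<^bsub>P\<^esub> ?h) = \<one> \<ominus> left_eval a g \<otimes> r"
    using a g wr(2) left_eval_const[OF a R.one_closed] left_eval_mult_monom[OF a g(1) wr(2), of 0]
    by (simp add: P.minus_eq R.minus_eq left_eval_add left_eval_a_inv)
  also have "\<dots> = (w \<oplus> left_eval a g \<otimes> r) \<ominus> left_eval a g \<otimes> r"
    by (simp flip: wr(3))
  also have "\<dots> = w"
    using \<open>w \<in> carrier R\<close> a g wr(2) by (simp add: R.minus_eq R.a_assoc R.r_neg)
  finally show ?thesis
    using that wr(1,2) g(1) by simp
qed

lemma maximal_right_ideal_left_eval_preimage: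
  assumes M: "maximal_right_ideal M R" and a: "a \<in> carrier R" and aM: "\<And>w. w \<in> M \<Longrightarrow> a \<otimes> w \<in> M"
  shows "maximal_right_ideal {f \<in> carrier P. left_eval a f \<in> M} P"
  unfolding maximal_right_ideal_def
proof (intro conjI allI impI)
  let ?I = "{f \<in> carrier P. left_eval a f \<in> M}"
  have "right_ideal M R"
    using M unfolding maximal_right_ideal_def by blast
  then show "right_ideal ?I P"
    using a aM by (rule right_ideal_left_eval_preimage)
  have "left_eval a \<one>\<^bsub>P\<^esub> = \<one>"
    using left_eval_const[OF a R.one_closed] by simp
  then have "\<one>\<^bsub>P\<^esub> \<notin> ?I"
    using R.maximal_right_ideal_one_notin[OF M] by simp
  then show "?I \<noteq> carrier P"
    by blast
  fix J assume J: "right_ideal J P \<and> ?I \<subseteq> J"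
  then have JP: "J \<subseteq> carrier P" "\<And>x y. x \<in> J \<Longrightarrow> y \<in> J \<Longrightarrow> x \<oplus>\<^bsub>P\<^esub> y \<in> J"
    "\<And>x r. x \<in> J \<Longrightarrow> r \<in> carrier P \<Longrightarrow> x \<otimes>\<^bsub>P\<^esub> r \<in> J"
    unfolding right_ideal_def P.additive_subgroup_iff by auto
  show "J = ?I \<or> J = carrier P"
  proof (cases "J \<subseteq> ?I")
    case True
    then show ?thesis using J by blast
  next
    case False
    then obtain g where g: "g \<in> J" "g \<notin> ?I" by blast
    have gP: "g \<in> carrier P"
      using JP(1) g(1) by blast
    with g(2) have "left_eval a g \<notin> M" by simp
    then obtain r where r: "r \<in> carrier R" "\<one>\<^bsub>P\<^esub> \<ominus>\<^bsub>P\<^esub> g \<otimes>\<^bsub>P\<^esub> up_ring.monom P r 0 \<in> ?I"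
      by (rule one_minus_in_left_eval_preimage[OF M a gP])
    let ?h = "g \<otimes>\<^bsub>P\<^esub> up_ring.monom P r 0"
    have "\<one>\<^bsub>P\<^esub> \<ominus>\<^bsub>P\<^esub> ?h \<in> J" "?h \<in> J"
      using J r JP(3) g(1) by auto
    then have "(\<one>\<^bsub>P\<^esub> \<ominus>\<^bsub>P\<^esub> ?h) \<oplus>\<^bsub>P\<^esub> ?h \<in> J"
      by (rule JP(2))
    then have "\<one>\<^bsub>P\<^esub> \<in> J"
      using gP r(1) by (simp add: P.minus_eq P.a_assoc P.l_neg)
    then show ?thesis
      using P.right_ideal_one_eq_carrier J by blast
  qed
qed

lemma not_right_quasi_invariant_UP_if_not_ideal:
  assumes M: "maximal_right_ideal M R" and s: "s \<in> M" and c: "c \<in> carrier R" and cs: "c \<otimes> s \<notin> M"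
  shows "\<not> right_quasi_invariant P"
proof
  assume "right_quasi_invariant P"
  \<comment> \<open>the polynomials with constant term in M\<close>
  let ?I = "{f \<in> carrier P. left_eval \<zero> f \<in> M}"
  have MR: "M \<subseteq> carrier R" "\<zero> \<in> M"
    using M unfolding maximal_right_ideal_def right_ideal_def R.additive_subgroup_iff by auto
  then have "\<zero> \<otimes> w \<in> M" if "w \<in> M" for w
    using that by (metis R.l_null subsetD)
  then have I: "ideal ?I P"
    using \<open>right_quasi_invariant P\<close> maximal_right_ideal_left_eval_preimage[OF M R.zero_closed]
    unfolding right_quasi_invariant_def by blast
  have "s \<in> carrier R"
    using s MR(1) by blast
  then have "up_ring.monom P s 0 \<in> ?I"
    using s by simp
  then have "up_ring.monom P c 0 \<otimes>\<^bsub>P\<^esub> up_ring.monom P s 0 \<in> ?I"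
    by (rule ideal.I_l_closed[OF I]) (simp add: c)
  with c cs \<open>s \<in> carrier R\<close> show False
    by (simp add: left_eval_mult_monom)
qed

lemma not_right_quasi_invariant_UP:
  assumes M: "maximal_right_ideal M R" and a: "a \<in> carrier R" and b: "b \<in> carrier R"
    and ab: "a \<otimes> b \<ominus> b \<otimes> a \<notin> M"
  shows "\<not> right_quasi_invariant P"
proof (cases "\<forall>w\<in>M. \<forall>c\<in>carrier R. c \<otimes> w \<in> M")
  case True
  show ?thesis
  proof
    assume "right_quasi_invariant P"
    let ?I = "{f \<in> carrier P. left_eval a f \<in> M}"
    have I: "ideal ?I P"
      using \<open>right_quasi_invariant P\<close> maximal_right_ideal_left_eval_preimage[OF M a] True a
      unfolding right_quasi_invariant_def by blast
    let ?q = "up_ring.monom P \<one> 1 \<ominus>\<^bsub>P\<^esub> up_ring.monom P a 0"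
    have "\<zero> \<in> M"
      using M unfolding maximal_right_ideal_def right_ideal_def R.additive_subgroup_iff by auto
    moreover have "left_eval a ?q = \<zero>"
      using a by (simp add: P.minus_eq R.minus_eq left_eval_add left_eval_a_inv left_eval_monom R.r_neg)
    ultimately have "?q \<in> ?I"
      using a by simp
    then have "up_ring.monom P b 0 \<otimes>\<^bsub>P\<^esub> ?q \<in> ?I"
      by (rule ideal.I_l_closed[OF I]) (simp add: b)
    moreover have "left_eval a (up_ring.monom P b 0 \<otimes>\<^bsub>P\<^esub> ?q) = a \<otimes> b \<ominus> b \<otimes> a"
      using a b
      by (simp add: P.minus_eq R.minus_eq P.r_distr P.r_minus left_eval_add left_eval_a_inv
          left_eval_mult_monom)
    ultimately show False
      using ab by simp
  qed
next
  case False
  then show ?thesis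
    using not_right_quasi_invariant_UP_if_not_ideal[OF M] by blast
qed

end

lemma not_left_quasi_invariant_UP:
  assumes A: "ring A" and L: "maximal_left_ideal L A" and a: "a \<in> carrier A" and b: "b \<in> carrier A"
    and ab: "a \<otimes>\<^bsub>A\<^esub> b \<ominus>\<^bsub>A\<^esub> b \<otimes>\<^bsub>A\<^esub> a \<notin> L"
  shows "\<not> left_quasi_invariant (UP A)"
proof -
  let ?B = "opposite_ring A"
  have AB: "opposite_rings A ?B"
    by (rule opposite_rings_opposite_ring)
  interpret UA: UP_ring A "UP A"
    using A by (simp add: UP_ring_def)
  interpret UB: UP_ring ?B "UP ?B"
    using ring.opposite_rings_ring[OF A AB] by (simp add: UP_ring_def)
  have "maximal_right_ideal L ?B"
    using opposite_rings_maximal_left_ideal[OF AB] L by simp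
  moreover have "b \<otimes>\<^bsub>?B\<^esub> a \<ominus>\<^bsub>?B\<^esub> a \<otimes>\<^bsub>?B\<^esub> b = a \<otimes>\<^bsub>A\<^esub> b \<ominus>\<^bsub>A\<^esub> b \<otimes>\<^bsub>A\<^esub> a"
    by (simp add: opposite_ring_def a_minus_def a_inv_def)
  ultimately have "\<not> right_quasi_invariant (UP ?B)"
    using UB.not_right_quasi_invariant_UP a b ab by (simp add: opposite_ring_def)
  moreover have "opposite_rings (UP A) (UP ?B)"
    using ring.opposite_rings_UP[OF A AB] .
  ultimately show ?thesis
    using UA.opposite_rings_quasi_invariant by blast
qed

section \<open>Central elements of polynomial rings\<close>

lemma centrally_essential_iff:
  "centrally_essential R \<longleftrightarrow>
     (\<forall>a \<in> carrier R. a \<notin> ring_center R \<longrightarrow>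
        (\<exists>x \<in> ring_center R. \<exists>y \<in> ring_center R. x \<noteq> \<zero>\<^bsub>R\<^esub> \<and> y \<noteq> \<zero>\<^bsub>R\<^esub> \<and> a \<otimes>\<^bsub>R\<^esub> x = y))"
proof -
  have "a \<in> ring_center R" if "mult_commutative R" "a \<in> carrier R" for a
    using that unfolding mult_commutative_def ring_center_def by simp
  then show ?thesis
    unfolding centrally_essential_def by blast
qed

context ring
begin

lemma ring_center_carrier: "z \<in> ring_center R \<Longrightarrow> z \<in> carrier R"
  unfolding ring_center_def by blast

lemma ring_center_zero: "\<zero> \<in> ring_center R"
  unfolding ring_center_def by auto

lemma ring_center_one: "\<one> \<in> ring_center R"
  unfolding ring_center_def by auto

lemma ring_center_mult:
  assumes x: "x \<in> ring_center R" and y: "y \<in> ring_center R"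
  shows "x \<otimes> y \<in> ring_center R"
proof -
  have xy: "x \<in> carrier R" "y \<in> carrier R"
    using x y by (simp_all add: ring_center_carrier)
  have comm: "x \<otimes> a = a \<otimes> x" "y \<otimes> a = a \<otimes> y" if "a \<in> carrier R" for a
    using x y that unfolding ring_center_def by auto
  have "x \<otimes> y \<otimes> a = a \<otimes> (x \<otimes> y)" if a: "a \<in> carrier R" for a
  proof -
    have "x \<otimes> y \<otimes> a = x \<otimes> (a \<otimes> y)"
      using xy a by (simp add: m_assoc comm(2)[OF a])
    also have "\<dots> = (a \<otimes> x) \<otimes> y"
      using xy a by (simp add: m_assoc flip: comm(1)[OF a])
    also have "\<dots> = a \<otimes> (x \<otimes> y)"
      using xy a by (simp add: m_assoc)
    finally show ?thesis .
  qed
  then show ?thesis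
    unfolding ring_center_def using xy by simp
qed

end

context UP_ring
begin

lemma monom_in_ring_center:
  assumes c: "c \<in> ring_center R"
  shows "up_ring.monom P c j \<in> ring_center P"
proof -
  have cR: "c \<in> carrier R"
    using c by (rule R.ring_center_carrier)
  have "up_ring.monom P c j \<otimes>\<^bsub>P\<^esub> g = g \<otimes>\<^bsub>P\<^esub> up_ring.monom P c j" if g: "g \<in> carrier P" for g
  proof (rule up_eqI)
    fix n
    show "up_ring.coeff P (up_ring.monom P c j \<otimes>\<^bsub>P\<^esub> g) n = up_ring.coeff P (g \<otimes>\<^bsub>P\<^esub> up_ring.monom P c j) n"
      using c g cR unfolding ring_center_def
      by (simp add: coeff_monom_mult_eq coeff_mult_monom_eq del: coeff_mult)
  qed (use cR g in auto)
  then show ?thesis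
    unfolding ring_center_def using cR by simp
qed

lemma in_ring_center_if_coeffs_central:
  assumes f: "f \<in> carrier P" and central: "\<And>i. up_ring.coeff P f i \<in> ring_center R"
  shows "f \<in> ring_center P"
proof -
  let ?m = "\<lambda>i. up_ring.monom P (up_ring.coeff P f i) i"
  have "f \<otimes>\<^bsub>P\<^esub> g = g \<otimes>\<^bsub>P\<^esub> f" if g: "g \<in> carrier P" for g
  proof -
    have "f \<otimes>\<^bsub>P\<^esub> g = (\<Oplus>\<^bsub>P\<^esub> i \<in> {..deg R f}. ?m i \<otimes>\<^bsub>P\<^esub> g)"
      using f g by (subst up_repr[OF f, symmetric]) (auto simp: P.finsum_ldistr)
    also have "\<dots> = (\<Oplus>\<^bsub>P\<^esub> i \<in> {..deg R f}. g \<otimes>\<^bsub>P\<^esub> ?m i)"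
    proof (intro P.finsum_cong')
      fix i
      show "?m i \<otimes>\<^bsub>P\<^esub> g = g \<otimes>\<^bsub>P\<^esub> ?m i"
        using monom_in_ring_center[OF central] g unfolding ring_center_def by blast
    qed (use f g in auto)
    also have "\<dots> = g \<otimes>\<^bsub>P\<^esub> f"
      using f g by (subst (2) up_repr[OF f, symmetric]) (auto simp: P.finsum_rdistr)
    finally show ?thesis .
  qed
  then show ?thesis
    unfolding ring_center_def using f by simp
qed

definition noncentral_coeffs :: "(nat \<Rightarrow> 'a) \<Rightarrow> nat set" where
  "noncentral_coeffs f = {i. up_ring.coeff P f i \<notin> ring_center R}"

lemma finite_noncentral_coeffs:
  assumes f: "f \<in> carrier P"
  shows "finite (noncentral_coeffs f)"
proof (rule finite_subset)
  show "noncentral_coeffs f \<subseteq> {..deg R f}"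
  proof
    fix i assume i: "i \<in> noncentral_coeffs f"
    show "i \<in> {..deg R f}"
    proof (rule ccontr)
      assume "i \<notin> {..deg R f}"
      then have "up_ring.coeff P f i = \<zero>"
        using deg_aboveD[OF _ f] by simp
      with i show False
        using R.ring_center_zero by (simp add: noncentral_coeffs_def)
    qed
  qed
qed simp

lemma noncentral_coeffs_mult_central_const:
  assumes ce: "centrally_essential R" and f: "f \<in> carrier P" and k: "k \<in> noncentral_coeffs f"
  obtains c where "c \<in> ring_center R" "f \<otimes>\<^bsub>P\<^esub> up_ring.monom P c 0 \<noteq> \<zero>\<^bsub>P\<^esub>"
    "noncentral_coeffs (f \<otimes>\<^bsub>P\<^esub> up_ring.monom P c 0) \<subset> noncentral_coeffs f"
proof -
  have "up_ring.coeff P f k \<in> carrier R" "up_ring.coeff P f k \<notin> ring_center R"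
    using f k by (simp_all add: noncentral_coeffs_def)
  then obtain c d where cd: "c \<in> ring_center R" "d \<in> ring_center R" "d \<noteq> \<zero>"
    "up_ring.coeff P f k \<otimes> c = d"
    using ce unfolding centrally_essential_iff by blast
  have cR: "c \<in> carrier R"
    using cd(1) by (rule R.ring_center_carrier)
  let ?g = "f \<otimes>\<^bsub>P\<^esub> up_ring.monom P c 0"
  have coeff_g: "up_ring.coeff P ?g n = up_ring.coeff P f n \<otimes> c" for n
    using coeff_mult_monom_eq[OF cR f, of 0] by simp
  have "?g \<noteq> \<zero>\<^bsub>P\<^esub>"
    using coeff_g[of k] cd(3,4) by auto
  moreover have "noncentral_coeffs ?g \<subseteq> noncentral_coeffs f"
    using coeff_g R.ring_center_mult[OF _ cd(1)] by (auto simp: noncentral_coeffs_def)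
  moreover have "k \<notin> noncentral_coeffs ?g"
    using coeff_g[of k] cd(2,4) by (simp add: noncentral_coeffs_def)
  ultimately show ?thesis
    using that cd(1) k by blast
qed

lemma ex_central_multiple_in_ring_center:
  assumes ce: "centrally_essential R" and f: "f \<in> carrier P" "f \<noteq> \<zero>\<^bsub>P\<^esub>"
  shows "\<exists>C \<in> ring_center P. f \<otimes>\<^bsub>P\<^esub> C \<in> ring_center P \<and> f \<otimes>\<^bsub>P\<^esub> C \<noteq> \<zero>\<^bsub>P\<^esub>"
  using f
proof (induction "card (noncentral_coeffs f)" arbitrary: f rule: less_induct)
  case less
  show ?case
  proof (cases "f \<in> ring_center P")
    case True
    then show ?thesis
      using less.prems P.ring_center_one by (intro bexI[of _ "\<one>\<^bsub>P\<^esub>"]) auto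
  next
    case False
    then obtain k where "k \<in> noncentral_coeffs f"
      using in_ring_center_if_coeffs_central less.prems(1) by (auto simp: noncentral_coeffs_def)
    then obtain c where c: "c \<in> ring_center R" "f \<otimes>\<^bsub>P\<^esub> up_ring.monom P c 0 \<noteq> \<zero>\<^bsub>P\<^esub>"
      "noncentral_coeffs (f \<otimes>\<^bsub>P\<^esub> up_ring.monom P c 0) \<subset> noncentral_coeffs f"
      using noncentral_coeffs_mult_central_const[OF ce less.prems(1)] by blast
    let ?c = "up_ring.monom P c 0"
    have cP: "?c \<in> ring_center P" "?c \<in> carrier P"
      using monom_in_ring_center[OF c(1)] R.ring_center_carrier[OF c(1)] by simp_all
    have "card (noncentral_coeffs (f \<otimes>\<^bsub>P\<^esub> ?c)) < card (noncentral_coeffs f)"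
      using c(3) finite_noncentral_coeffs[OF less.prems(1)] by (simp add: psubset_card_mono)
    then obtain C where C: "C \<in> ring_center P" "f \<otimes>\<^bsub>P\<^esub> ?c \<otimes>\<^bsub>P\<^esub> C \<in> ring_center P"
      "f \<otimes>\<^bsub>P\<^esub> ?c \<otimes>\<^bsub>P\<^esub> C \<noteq> \<zero>\<^bsub>P\<^esub>"
      using less.hyps less.prems(1) cP(2) c(2) by blast
    moreover have "f \<otimes>\<^bsub>P\<^esub> ?c \<otimes>\<^bsub>P\<^esub> C = f \<otimes>\<^bsub>P\<^esub> (?c \<otimes>\<^bsub>P\<^esub> C)"
      using less.prems(1) cP(2) P.ring_center_carrier[OF C(1)] by (simp add: P.m_assoc)
    moreover have "?c \<otimes>\<^bsub>P\<^esub> C \<in> ring_center P"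
      using P.ring_center_mult[OF cP(1) C(1)] .
    ultimately show ?thesis
      by auto
  qed
qed

lemma centrally_essential_UP:
  assumes "centrally_essential R"
  shows "centrally_essential P"
  unfolding centrally_essential_iff
proof (intro ballI impI)
  fix f assume f: "f \<in> carrier P" "f \<notin> ring_center P"
  then have "f \<noteq> \<zero>\<^bsub>P\<^esub>"
    using P.ring_center_zero by auto
  then obtain C where C: "C \<in> ring_center P" "f \<otimes>\<^bsub>P\<^esub> C \<in> ring_center P" "f \<otimes>\<^bsub>P\<^esub> C \<noteq> \<zero>\<^bsub>P\<^esub>"
    using ex_central_multiple_in_ring_center[OF assms f(1)] by blast
  moreover have "C \<noteq> \<zero>\<^bsub>P\<^esub>"
    using C(3) f(1) by auto
  ultimately show "\<exists>x \<in> ring_center P. \<exists>y \<in> ring_center P.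
      x \<noteq> \<zero>\<^bsub>P\<^esub> \<and> y \<noteq> \<zero>\<^bsub>P\<^esub> \<and> f \<otimes>\<^bsub>P\<^esub> x = y"
    by blast
qed

end

section \<open>The factor ring by the Jacobson radical\<close>

context ring
begin

lemma jacobson_radical_additive_subgroup: "additive_subgroup (jacobson_radical R) R"
proof -
  have M: "additive_subgroup M R" if "maximal_right_ideal M R" for M
    using that unfolding maximal_right_ideal_def right_ideal_def by blast
  show ?thesis
    unfolding additive_subgroup_iff jacobson_radical_def
    using additive_subgroup.zero_closed[OF M] additive_subgroup.a_closed[OF M]
      additive_subgroup.a_inv_closed[OF M] by auto
qed

lemma mult_commutative_FactRing:
  assumes I: "additive_subgroup I R"
    and comm: "\<And>a b. a \<in> carrier R \<Longrightarrow> b \<in> carrier R \<Longrightarrow> a \<otimes> b \<ominus> b \<otimes> a \<in> I"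
  shows "mult_commutative (R Quot I)"
proof -
  interpret abelian_subgroup I R
    using I is_abelian_group by (rule abelian_subgroupI3)
  have coset_eq: "I +> (a \<otimes> b) = I +> (b \<otimes> a)" if "a \<in> carrier R" "b \<in> carrier R" for a b
  proof -
    have "a \<otimes> b \<in> I +> (b \<otimes> a)"
      using a_rcos_module_minus[OF ring_axioms, of "b \<otimes> a" "a \<otimes> b"] comm that by simp
    then show ?thesis
      using a_repr_independence'[of "a \<otimes> b" "b \<otimes> a"] that by simp
  qed
  show ?thesis
    unfolding mult_commutative_def
  proof (intro ballI)
    fix U V assume "U \<in> carrier (R Quot I)" "V \<in> carrier (R Quot I)"
    then have "U \<subseteq> carrier R" "V \<subseteq> carrier R"
      using a_rcosets_carrier unfolding FactRing_def by auto
    then have "(\<Union>a\<in>U. \<Union>b\<in>V. I +> (a \<otimes> b)) = (\<Union>a\<in>U. \<Union>b\<in>V. I +> (b \<otimes> a))"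
      using coset_eq by (intro SUP_cong refl) blast+
    also have "\<dots> = (\<Union>b\<in>V. \<Union>a\<in>U. I +> (b \<otimes> a))"
      by blast
    finally show "U \<otimes>\<^bsub>R Quot I\<^esub> V = V \<otimes>\<^bsub>R Quot I\<^esub> U"
      unfolding FactRing_def rcoset_mult_def by simp
  qed
qed

end

theorem lemma2p2:
  fixes A :: "('a, 'm) ring_scheme"
  assumes "ring A"
    and "\<one>\<^bsub>A\<^esub> \<noteq> \<zero>\<^bsub>A\<^esub>"
    and "centrally_essential A"
    and "\<not> mult_commutative (A Quot jacobson_radical A)"
  shows "centrally_essential (UP A) \<and> \<not> right_quasi_invariant (UP A) \<and> \<not> left_quasi_invariant (UP A)"
proof -
  interpret UP_ring A "UP A"
    using assms(1) by (simp add: UP_ring_def)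
  obtain a b where ab: "a \<in> carrier A" "b \<in> carrier A"
    and not_J: "a \<otimes>\<^bsub>A\<^esub> b \<ominus>\<^bsub>A\<^esub> b \<otimes>\<^bsub>A\<^esub> a \<notin> jacobson_radical A"
    using R.mult_commutative_FactRing[OF R.jacobson_radical_additive_subgroup] assms(4) by blast
  let ?c = "a \<otimes>\<^bsub>A\<^esub> b \<ominus>\<^bsub>A\<^esub> b \<otimes>\<^bsub>A\<^esub> a"
  have c: "?c \<in> carrier A"
    using ab by simp
  with not_J obtain M where M: "maximal_right_ideal M A" "?c \<notin> M"
    unfolding jacobson_radical_def by blast
  from not_J obtain L where L: "maximal_left_ideal L A" "?c \<notin> L"
    using R.jacobson_radical_if_in_maximal_left_ideals[OF c] by blast
  have "centrally_essential (UP A)"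
    using assms(3) by (rule centrally_essential_UP)
  moreover have "\<not> right_quasi_invariant (UP A)"
    using M(1) ab M(2) by (rule not_right_quasi_invariant_UP)
  moreover have "\<not> left_quasi_invariant (UP A)"
    using assms(1) L(1) ab L(2) by (rule not_left_quasi_invariant_UP)
  ultimately show ?thesis by blast
qed

end
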